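(* Let $\alpha\in(0,1]$, $\gamma\in(0,\infty)$, $s\in\mathbb{R}$, and $\Gamma(x,t)=x-t^\alpha$ for $t\in[0,1]$. Suppose there is a constant $C$ such that for all Schwartz functions $f$ on $\mathbb{R}$, $$\Big\|\sup_{t\in[0,1]}|P_\gamma f(\Gamma(x,t),t)|\Big\|_{L^2([-1,1])}\le C\|f\|_{H^s}.$$ Then $s\ge\max\{\tfrac12-\tfrac\alpha\gamma,0\}$ if $\gamma\in(0,1)$, and $s\ge\max\{\tfrac12-\alpha,0\}$ if $\gamma\in[1,\infty)$.
   Context: For $\gamma>0$ and $t\in[0,1]$, $$P_\gamma f(\Gamma(x,t),t)=\frac1{2\pi}\int_{\mathbb{R}}e^{i(\Gamma(x,t)\xi+t|\xi|^2)}e^{-t^\gamma|\xi|^2}\hat f(\xi)\,d\xi,$$ where $\hat f(\xi)=\int e^{-ix\xi}f(x)\,dx$, and $\|f\|_{H^s}=\|(1+|\xi|^2)^{s/2}\hat f\|_{L^2}$. *)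

theory Defs
  imports "HOL-Analysis.Analysis"
begin

fun higher_vderiv :: "nat \<Rightarrow> (real \<Rightarrow> complex) \<Rightarrow> real \<Rightarrow> complex" where
  "higher_vderiv 0 f = f"
| "higher_vderiv (Suc n) f = (\<lambda>x. vector_derivative (higher_vderiv n f) (at x))"

definition schwartz :: "(real \<Rightarrow> complex) \<Rightarrow> bool" where
  "schwartz f \<longleftrightarrow>
     (\<forall>n x. higher_vderiv n f differentiable (at x)) \<and>
     (\<forall>j k. \<exists>B. \<forall>x. \<bar>x\<bar> ^ k * norm (higher_vderiv j f x) \<le> B)"

definition fourier :: "(real \<Rightarrow> complex) \<Rightarrow> real \<Rightarrow> complex" where
  "fourier f \<xi> = (\<integral>x. exp (- \<i> * complex_of_real (x * \<xi>)) * f x \<partial>lborel)"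

definition P_op :: "real \<Rightarrow> (real \<Rightarrow> complex) \<Rightarrow> real \<Rightarrow> real \<Rightarrow> complex" where
  "P_op \<gamma> f y t = complex_of_real (1 / (2 * pi)) *
     (\<integral>\<xi>. exp (\<i> * complex_of_real (y * \<xi> + t * \<xi>\<^sup>2))
            * complex_of_real (exp (- (t powr \<gamma>) * \<xi>\<^sup>2)) * fourier f \<xi> \<partial>lborel)"

definition Hs_norm :: "real \<Rightarrow> (real \<Rightarrow> complex) \<Rightarrow> real" where
  "Hs_norm s f = sqrt (\<integral>\<xi>. (1 + \<xi>\<^sup>2) powr s * (norm (fourier f \<xi>))\<^sup>2 \<partial>lborel)"

definition Gamma_curve :: "real \<Rightarrow> real \<Rightarrow> real \<Rightarrow> real" where
  "Gamma_curve \<alpha> x t = x - t powr \<alpha>"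

definition max_norm :: "real \<Rightarrow> real \<Rightarrow> (real \<Rightarrow> complex) \<Rightarrow> real" where
  "max_norm \<alpha> \<gamma> f = sqrt (LINT x:{-1..1}|lborel.
      (SUP t\<in>{0..1}. norm (P_op \<gamma> f (Gamma_curve \<alpha> x t) t))\<^sup>2)"

end

theory Submission
  imports Defs "HOL-Probability.Characteristic_Functions" "HOL-Real_Asymp.Real_Asymp"
begin

text \<open>Both bounds come from testing the estimate on Gaussian wave packets \<open>g(\<sigma>,\<omega>)\<close>, whose
  Fourier transform is \<open>exp (-\<sigma>\<^sup>2 (\<xi> - \<omega>)\<^sup>2 / 2)\<close>. At \<open>t = 0\<close> the operator reproduces the
  packet, so the maximal function of \<open>g(1,\<omega>)\<close> is bounded below on \<open>[-1,1]\<close> uniformly in \<open>\<omega>\<close>,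
  while its \<open>H\<^sup>s\<close> norm tends to \<open>0\<close> as \<open>\<omega> \<rightarrow> \<infinity>\<close> if \<open>s < 0\<close>.
  For the narrow packet \<open>g(1/N,0)\<close> neither the oscillation \<open>e^{it\<xi>\<^sup>2}\<close> nor the damping
  \<open>e^{-t^\<gamma> \<xi>\<^sup>2}\<close> matters as long as \<open>t, t^\<gamma> \<le> 1/(8N\<^sup>2)\<close>, which gives
  \<open>|P\<^sub>\<gamma> g(0,t)| \<ge> N/(4 sqrt \<pi>)\<close>. The curve \<open>x - t^\<alpha>\<close> passes through \<open>0\<close> at such a time for
  every \<open>x \<in> [0,\<delta>]\<close> with \<open>\<delta> = (8N\<^sup>2)^{-\<alpha>/min(\<gamma>,1)}\<close>, so the left-hand side is at least
  \<open>c N^{1-\<alpha>/min(\<gamma>,1)}\<close>, whereas the \<open>H\<^sup>s\<close> norm is \<open>O(N^{s+1/2})\<close> for \<open>0 \<le> s \<le> 1\<close>.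
  Letting \<open>N \<rightarrow> \<infinity>\<close> gives \<open>s \<ge> 1/2 - \<alpha>/min(\<gamma>,1)\<close>.\<close>

lemma one_minus_le_cos: "(u::real) \<ge> 0 \<Longrightarrow> 1 - u \<le> cos u"
proof -
  assume u: "u \<ge> 0"
  have "(sin (u / 2))\<^sup>2 = \<bar>sin (u / 2)\<bar> * \<bar>sin (u / 2)\<bar>"
    by (simp add: power2_eq_square)
  also have "\<dots> \<le> \<bar>u / 2\<bar> * 1"
    by (intro mult_mono abs_sin_x_le_abs_x abs_sin_le_one) auto
  finally show ?thesis
    using cos_double_sin [of "u / 2"] u by simp
qed

lemma le_exp_half: "(y::real) \<ge> 0 \<Longrightarrow> y \<le> exp (y / 2)"
proof -
  assume y: "y \<ge> 0"
  have "y \<le> (1 + y / 4)\<^sup>2"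
    using zero_le_power2 [of "y / 4 - 1"] by (simp add: power2_eq_square algebra_simps)
  also have "\<dots> \<le> (exp (y / 4))\<^sup>2"
    using y by (intro power_mono) (auto simp: add_increasing)
  also have "\<dots> = exp (y / 2)"
    by (simp add: power2_eq_square exp_add [symmetric])
  finally show ?thesis .
qed

lemma abs_power_mult_gaussian_le:
  fixes x a :: real
  assumes a: "a > 0"
  shows "\<bar>x\<bar> ^ m * exp (- a * x\<^sup>2) \<le> 1 + (real m / a) ^ m"
proof (cases "m = 0")
  case True
  have "exp (- a * x\<^sup>2) \<le> 1"
    using a by simp
  then show ?thesis
    using True by (simp del: exp_le_one_iff)
next
  case False
  define y where "y = a * x\<^sup>2"
  have y: "y \<ge> 0"
    using a by (simp add: y_def)
  have "(y / real m) ^ m \<le> (1 + y / real m) ^ m"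
    using y by (intro power_mono) auto
  also have "\<dots> \<le> exp y"
    using y False by (intro exp_ge_one_plus_x_over_n_power_n) auto
  finally have "(y / real m) ^ m \<le> exp y" .
  moreover have "(x\<^sup>2) ^ m = (real m / a) ^ m * (y / real m) ^ m"
    using a False by (simp add: y_def power_mult_distrib [symmetric])
  ultimately have "(x\<^sup>2) ^ m \<le> (real m / a) ^ m * exp y"
    using a by (simp add: mult_left_mono)
  then have even_power: "(x\<^sup>2) ^ m * exp (- y) \<le> (real m / a) ^ m"
    by (simp add: exp_minus field_simps)
  have "\<bar>x\<bar> ^ m \<le> 1 + (x\<^sup>2) ^ m"
  proof (cases "\<bar>x\<bar> \<le> 1")
    case True
    then show ?thesis
      by (simp add: power_le_one add_increasing2)
  next
    case False
    then have "\<bar>x\<bar> ^ m \<le> \<bar>x\<bar> ^ (2 * m)"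
      by (intro power_increasing) auto
    then show ?thesis
      by (simp add: power_mult power_even_abs_numeral)
  qed
  then have "\<bar>x\<bar> ^ m * exp (- y) \<le> (1 + (x\<^sup>2) ^ m) * exp (- y)"
    by (rule mult_right_mono) simp
  also have "\<dots> = exp (- y) + (x\<^sup>2) ^ m * exp (- y)"
    by (simp add: distrib_right)
  also have "\<dots> \<le> 1 + (real m / a) ^ m"
    using even_power y by (intro add_mono) auto
  finally show ?thesis
    by (simp add: y_def)
qed

lemma powr_le_const_mult_powr_imp_le:
  fixes c K p q :: real
  assumes c: "c > 0" and le: "\<And>N. N \<ge> 1 \<Longrightarrow> c * N powr p \<le> K * N powr q"
  shows "p \<le> q"
proof (rule ccontr)
  assume "\<not> p \<le> q"
  then have "filterlim (\<lambda>N. c * N powr (p - q)) at_top at_top"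
    using c by real_asymp
  then have "\<forall>\<^sub>F N in at_top. K < c * N powr (p - q)"
    by (simp add: filterlim_at_top_dense)
  then obtain N\<^sub>0 where "\<And>N. N \<ge> N\<^sub>0 \<Longrightarrow> K < c * N powr (p - q)"
    by (auto simp: eventually_at_top_linorder)
  then obtain N where N: "1 \<le> N" "K < c * N powr (p - q)"
    by (meson max.cobounded1 max.cobounded2)
  have "c * N powr (p - q) * N powr q \<le> K * N powr q"
    using le [OF N(1)] by (simp add: mult.assoc flip: powr_add)
  then show False
    using N by (simp add: mult_le_cancel_right_pos)
qed

lemma continuous_on_parametric_integral:
  fixes g :: "'a::metric_space \<Rightarrow> 'b \<Rightarrow> 'c::{banach, second_countable_topology}"
  assumes "integrable M w"
    and "\<And>y \<xi>. norm (g y \<xi>) \<le> w \<xi>"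
    and "\<And>\<xi>. continuous_on UNIV (\<lambda>y. g y \<xi>)"
    and "\<And>y. g y \<in> borel_measurable M"
  shows "continuous_on UNIV (\<lambda>y. \<integral>\<xi>. g y \<xi> \<partial>M)"
  unfolding continuous_on_sequentially
proof (intro allI ballI impI, elim conjE)
  fix x :: "nat \<Rightarrow> 'a" and a
  assume "x \<longlonglongrightarrow> a"
  then have "(\<lambda>i. \<integral>\<xi>. g (x i) \<xi> \<partial>M) \<longlonglongrightarrow> (\<integral>\<xi>. g a \<xi> \<partial>M)"
    using assms(1,2,4) by (intro integral_dominated_convergence [where w = w] AE_I2
        continuous_on_tendsto_compose [OF assms(3)]) auto
  then show "((\<lambda>y. \<integral>\<xi>. g y \<xi> \<partial>M) \<circ> x) \<longlonglongrightarrow> (\<integral>\<xi>. g a \<xi> \<partial>M)"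
    by (simp add: o_def)
qed

lemma borel_measurable_SUP_continuous:
  fixes F :: "'a::topological_space \<Rightarrow> 'b \<Rightarrow> real"
  assumes "\<And>t. t \<in> T \<Longrightarrow> continuous_on UNIV (\<lambda>x. F x t)"
    and "T \<noteq> {}"
    and "\<And>x. bdd_above (F x ` T)"
  shows "(\<lambda>x. SUP t\<in>T. F x t) \<in> borel_measurable borel"
  unfolding borel_measurable_iff_greater
proof
  fix c
  have "{x \<in> space borel. c < (SUP t\<in>T. F x t)} = (\<Union>t\<in>T. {x. c < F x t})"
    using less_cSUP_iff [OF assms(2,3)] by auto
  moreover have "open (\<Union>t\<in>T. {x. c < F x t})"
    using assms(1) by (intro open_UN ballI open_Collect_less continuous_on_const) auto
  ultimately show "{x \<in> space borel. c < (SUP t\<in>T. F x t)} \<in> sets borel"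
    by simp
qed

section \<open>Gaussian integrals\<close>

lemma has_bochner_integral_gaussian:
  fixes c b :: real
  assumes "c > 0"
  shows "has_bochner_integral lborel (\<lambda>u. exp (- c * (u - b)\<^sup>2)) (sqrt (pi / c))"
proof -
  define \<sigma> where "\<sigma> = sqrt (1 / (2 * c))"
  have \<sigma>: "\<sigma>\<^sup>2 = 1 / (2 * c)" "\<sigma> > 0"
    using assms by (auto simp: \<sigma>_def)
  have "has_bochner_integral lborel (\<lambda>u. sqrt (2 * pi * \<sigma>\<^sup>2) * normal_density b \<sigma> u) (sqrt (2 * pi * \<sigma>\<^sup>2) * 1)"
    using \<sigma>(2) by (intro has_bochner_integral_mult_right) (simp add: has_bochner_integral_iff)
  moreover have "(\<lambda>u. sqrt (2 * pi * \<sigma>\<^sup>2) * normal_density b \<sigma> u) = (\<lambda>u. exp (- c * (u - b)\<^sup>2))"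
    using \<sigma> assms by (auto simp: normal_density_def field_simps)
  ultimately show ?thesis
    using \<sigma> by simp
qed

lemma integrable_gaussian: "c > 0 \<Longrightarrow> integrable lborel (\<lambda>u::real. exp (- c * (u - b)\<^sup>2))"
  using has_bochner_integral_gaussian has_bochner_integral_iff by blast

lemma integral_gaussian: "c > 0 \<Longrightarrow> (\<integral>u. exp (- c * (u - b)\<^sup>2) \<partial>lborel) = sqrt (pi / c)"
  using has_bochner_integral_gaussian has_bochner_integral_iff by blast

lemma integral_iexp_std_gaussian:
  "(\<integral>x. complex_of_real (exp (- x\<^sup>2 / 2)) * exp (\<i> * complex_of_real (\<xi> * x)) \<partial>lborel)
     = complex_of_real (sqrt (2 * pi) * exp (- \<xi>\<^sup>2 / 2))"
proof -
  have "complex_of_real (exp (- \<xi>\<^sup>2 / 2)) = char std_normal_distribution \<xi>"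
    by (simp add: char_std_normal_distribution)
  also have "\<dots> = (\<integral>x. std_normal_density x *\<^sub>R exp (\<i> * complex_of_real (\<xi> * x)) \<partial>lborel)"
    unfolding char_def by (subst integral_density) auto
  also have "\<dots> = complex_of_real (1 / sqrt (2 * pi)) *
      (\<integral>x. complex_of_real (exp (- x\<^sup>2 / 2)) * exp (\<i> * complex_of_real (\<xi> * x)) \<partial>lborel)"
    unfolding std_normal_density_def scaleR_conv_of_real
    by (subst integral_mult_right_zero [symmetric]) (simp add: mult.assoc)
  finally show ?thesis
    by (simp add: field_simps of_real_mult [symmetric] del: of_real_mult)
qed

lemma integral_iexp_gaussian:
  fixes a b c :: real
  assumes c: "c > 0"
  shows "(\<integral>u. exp (\<i> * complex_of_real (a * u)) * complex_of_real (exp (- c * (u - b)\<^sup>2)) \<partial>lborel)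
     = exp (\<i> * complex_of_real (a * b)) * complex_of_real (sqrt (pi / c) * exp (- a\<^sup>2 / (4 * c)))"
proof -
  define k where "k = 1 / sqrt (2 * c)"
  have k: "k > 0" "c * k\<^sup>2 = 1 / 2"
    using c by (auto simp: k_def power_divide)
  have substitute: "exp (\<i> * complex_of_real (a * (b + k * x))) * complex_of_real (exp (- c * ((b + k * x) - b)\<^sup>2))
      = exp (\<i> * complex_of_real (a * b)) *
        (complex_of_real (exp (- x\<^sup>2 / 2)) * exp (\<i> * complex_of_real ((a * k) * x)))" for x
  proof -
    have "- c * ((b + k * x) - b)\<^sup>2 = - x\<^sup>2 / 2"
      using k by (simp add: power_mult_distrib)
    moreover have "exp (\<i> * complex_of_real (a * (b + k * x)))
        = exp (\<i> * complex_of_real (a * b)) * exp (\<i> * complex_of_real ((a * k) * x))"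
      by (simp add: exp_add [symmetric] algebra_simps)
    ultimately show ?thesis
      by (simp add: ac_simps)
  qed
  have "(\<integral>u. exp (\<i> * complex_of_real (a * u)) * complex_of_real (exp (- c * (u - b)\<^sup>2)) \<partial>lborel)
     = \<bar>k\<bar> *\<^sub>R (\<integral>x. exp (\<i> * complex_of_real (a * (b + k * x))) *
          complex_of_real (exp (- c * ((b + k * x) - b)\<^sup>2)) \<partial>lborel)"
    using k by (intro lborel_integral_real_affine) auto
  also have "\<dots> = k *\<^sub>R (exp (\<i> * complex_of_real (a * b)) *
      complex_of_real (sqrt (2 * pi) * exp (- (a * k)\<^sup>2 / 2)))"
    using k by (simp only: substitute integral_mult_right_zero integral_iexp_std_gaussian abs_of_pos)
  also have "k * sqrt (2 * pi) = sqrt (pi / c)"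
    using c by (simp add: k_def real_sqrt_divide real_sqrt_mult field_simps)
  moreover have "(a * k)\<^sup>2 / 2 = a\<^sup>2 / (4 * c)"
    using k c by (simp add: power_mult_distrib field_simps)
  ultimately show ?thesis
    by (simp add: scaleR_conv_of_real ac_simps of_real_mult [symmetric] del: of_real_mult)
qed

lemma integral_chirp_gaussian_ge:
  fixes t b :: real
  assumes t: "0 \<le> t" and b: "0 < b" and tb: "4 * t \<le> b"
  shows "sqrt (pi / b) / 2 \<le> (\<integral>\<xi>. cos (t * \<xi>\<^sup>2) * exp (- b * \<xi>\<^sup>2) \<partial>lborel)"
proof -
  have gauss: "integrable lborel (\<lambda>\<xi>. exp (- c * \<xi>\<^sup>2))" "(\<integral>\<xi>. exp (- c * \<xi>\<^sup>2) \<partial>lborel) = sqrt (pi / c)"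
    if "c > 0" for c :: real
    using integrable_gaussian [OF that, of 0] integral_gaussian [OF that, of 0] by simp_all
  have pointwise: "exp (- b * \<xi>\<^sup>2) - t / b * exp (- (b / 2) * \<xi>\<^sup>2) \<le> cos (t * \<xi>\<^sup>2) * exp (- b * \<xi>\<^sup>2)" for \<xi>
  proof -
    have "b * \<xi>\<^sup>2 * exp (- b * \<xi>\<^sup>2) \<le> exp (b * \<xi>\<^sup>2 / 2) * exp (- b * \<xi>\<^sup>2)"
      using b le_exp_half [of "b * \<xi>\<^sup>2"] by (intro mult_right_mono) auto
    also have "\<dots> = exp (- (b / 2) * \<xi>\<^sup>2)"
      by (simp add: exp_add [symmetric])
    finally have "t / b * (b * \<xi>\<^sup>2 * exp (- b * \<xi>\<^sup>2)) \<le> t / b * exp (- (b / 2) * \<xi>\<^sup>2)"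
      using t b by (intro mult_left_mono) auto
    then have "t * \<xi>\<^sup>2 * exp (- b * \<xi>\<^sup>2) \<le> t / b * exp (- (b / 2) * \<xi>\<^sup>2)"
      using b by simp
    moreover have "(1 - t * \<xi>\<^sup>2) * exp (- b * \<xi>\<^sup>2) \<le> cos (t * \<xi>\<^sup>2) * exp (- b * \<xi>\<^sup>2)"
      using one_minus_le_cos [of "t * \<xi>\<^sup>2"] t by (intro mult_right_mono) auto
    ultimately show ?thesis
      by (simp add: algebra_simps)
  qed
  have "sqrt (pi / b) / 2 \<le> sqrt (pi / b) - t / b * sqrt (pi / (b / 2))"
  proof -
    have "sqrt (pi / (b / 2)) = sqrt 2 * sqrt (pi / b)"
      by (simp add: real_sqrt_mult [symmetric] field_simps)
    moreover have "sqrt 2 * (t / b) \<le> 2 * (1 / 4)"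
      using t b tb real_sqrt_le_mono [of 2 4] by (intro mult_mono) (auto simp: real_sqrt_four)
    ultimately show ?thesis
      using mult_right_mono [of "sqrt 2 * (t / b)" "1 / 2" "sqrt (pi / b)"] b by (simp add: ac_simps)
  qed
  also have "\<dots> = (\<integral>\<xi>. exp (- b * \<xi>\<^sup>2) - t / b * exp (- (b / 2) * \<xi>\<^sup>2) \<partial>lborel)"
    using b gauss [of b] gauss [of "b / 2"] by simp
  also have "\<dots> \<le> (\<integral>\<xi>. cos (t * \<xi>\<^sup>2) * exp (- b * \<xi>\<^sup>2) \<partial>lborel)"
  proof (rule integral_mono [OF _ _ pointwise])
    show "integrable lborel (\<lambda>\<xi>. exp (- b * \<xi>\<^sup>2) - t / b * exp (- (b / 2) * \<xi>\<^sup>2))"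
      using b by (intro Bochner_Integration.integrable_diff integrable_mult_right gauss(1)) auto
    show "integrable lborel (\<lambda>\<xi>. cos (t * \<xi>\<^sup>2) * exp (- b * \<xi>\<^sup>2))"
      by (rule Bochner_Integration.integrable_bound [OF gauss(1) [OF b]])
        (auto simp: abs_mult mult_left_le_one_le)
  qed
  finally show ?thesis .
qed

section \<open>Gaussian wave packets\<close>

definition packet_phase :: "real \<Rightarrow> real \<Rightarrow> complex poly" where
  "packet_phase \<omega> a = [:0, \<i> * complex_of_real \<omega>, - complex_of_real a:]"

definition poly_packet :: "complex poly \<Rightarrow> real \<Rightarrow> real \<Rightarrow> real \<Rightarrow> complex" where
  "poly_packet P \<omega> a x = poly P (complex_of_real x) * exp (poly (packet_phase \<omega> a) (complex_of_real x))"

lemma norm_exp_packet_phase: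
  "norm (exp (poly (packet_phase \<omega> a) (complex_of_real x))) = exp (- a * x\<^sup>2)"
  by (simp add: packet_phase_def power2_eq_square)

lemma has_vector_derivative_poly_packet:
  "(poly_packet P \<omega> a has_vector_derivative
      poly_packet (pderiv P + P * pderiv (packet_phase \<omega> a)) \<omega> a x) (at x)"
proof -
  have "((\<lambda>z. poly P z * exp (poly (packet_phase \<omega> a) z)) has_field_derivative
      poly (pderiv P + P * pderiv (packet_phase \<omega> a)) z * exp (poly (packet_phase \<omega> a) z)) (at z)" for z
    by (rule DERIV_cong [OF DERIV_mult [OF poly_DERIV DERIV_chain2 [OF DERIV_exp poly_DERIV]]])
      (simp add: algebra_simps)
  from has_vector_derivative_real_field [OF this]
  show ?thesis
    unfolding poly_packet_def by blast
qed

lemma higher_vderiv_poly_packet: "\<exists>Q. higher_vderiv n (poly_packet P \<omega> a) = poly_packet Q \<omega> a"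
proof (induction n)
  case 0
  then show ?case
    by auto
next
  case (Suc n)
  then obtain Q where "higher_vderiv n (poly_packet P \<omega> a) = poly_packet Q \<omega> a"
    by blast
  then show ?case
    by (auto simp: vector_derivative_at [OF has_vector_derivative_poly_packet])
qed

lemma poly_packet_decay:
  assumes a: "a > 0"
  shows "\<exists>B. \<forall>x. \<bar>x\<bar> ^ k * norm (poly_packet P \<omega> a x) \<le> B"
proof -
  have "\<bar>x\<bar> ^ k * norm (poly_packet P \<omega> a x)
      \<le> (\<Sum>i\<le>degree P. norm (coeff P i) * (1 + (real (k + i) / a) ^ (k + i)))" for x
  proof -
    have "norm (poly P (complex_of_real x)) \<le> (\<Sum>i\<le>degree P. norm (coeff P i) * \<bar>x\<bar> ^ i)"
      unfolding poly_altdef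
      by (rule order_trans [OF norm_sum]) (simp add: norm_mult norm_power)
    then have "\<bar>x\<bar> ^ k * norm (poly_packet P \<omega> a x)
        \<le> \<bar>x\<bar> ^ k * (\<Sum>i\<le>degree P. norm (coeff P i) * \<bar>x\<bar> ^ i) * exp (- a * x\<^sup>2)"
      unfolding poly_packet_def norm_mult norm_exp_packet_phase mult.assoc
      by (intro mult_left_mono mult_right_mono) auto
    also have "\<dots> = (\<Sum>i\<le>degree P. norm (coeff P i) * (\<bar>x\<bar> ^ (k + i) * exp (- a * x\<^sup>2)))"
      by (simp add: sum_distrib_left sum_distrib_right power_add algebra_simps)
    also have "\<dots> \<le> (\<Sum>i\<le>degree P. norm (coeff P i) * (1 + (real (k + i) / a) ^ (k + i)))"
      by (intro sum_mono mult_left_mono abs_power_mult_gaussian_le a) auto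
    finally show ?thesis .
  qed
  then show ?thesis
    by blast
qed

lemma schwartz_poly_packet:
  assumes "a > 0"
  shows "schwartz (poly_packet P \<omega> a)"
  unfolding schwartz_def
proof (intro conjI allI)
  fix n x
  obtain Q where "higher_vderiv n (poly_packet P \<omega> a) = poly_packet Q \<omega> a"
    using higher_vderiv_poly_packet by blast
  then show "higher_vderiv n (poly_packet P \<omega> a) differentiable at x"
    using has_vector_derivative_poly_packet by (metis differentiableI_vector)
next
  fix j k
  obtain Q where "higher_vderiv j (poly_packet P \<omega> a) = poly_packet Q \<omega> a"
    using higher_vderiv_poly_packet by blast
  then show "\<exists>B. \<forall>x. \<bar>x\<bar> ^ k * norm (higher_vderiv j (poly_packet P \<omega> a) x) \<le> B"
    using poly_packet_decay [OF assms] by simp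
qed

definition gaussian_packet :: "real \<Rightarrow> real \<Rightarrow> real \<Rightarrow> complex" where
  "gaussian_packet \<sigma> \<omega> x = complex_of_real (1 / (\<sigma> * sqrt (2 * pi))) *
     exp (\<i> * complex_of_real (\<omega> * x)) * complex_of_real (exp (- x\<^sup>2 / (2 * \<sigma>\<^sup>2)))"

lemma gaussian_packet_eq_poly_packet:
  "gaussian_packet \<sigma> \<omega> = poly_packet [:complex_of_real (1 / (\<sigma> * sqrt (2 * pi))):] \<omega> (1 / (2 * \<sigma>\<^sup>2))"
proof
  fix x
  have phase: "poly (packet_phase \<omega> (1 / (2 * \<sigma>\<^sup>2))) (complex_of_real x)
      = \<i> * complex_of_real (\<omega> * x) + complex_of_real (- x\<^sup>2 / (2 * \<sigma>\<^sup>2))"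
    by (simp add: packet_phase_def power2_eq_square algebra_simps)
  show "gaussian_packet \<sigma> \<omega> x = poly_packet [:complex_of_real (1 / (\<sigma> * sqrt (2 * pi))):] \<omega> (1 / (2 * \<sigma>\<^sup>2)) x"
    unfolding gaussian_packet_def poly_packet_def phase exp_add exp_of_real by (simp only: mult.assoc poly_pCons poly_0 mult_zero_right add_0_right)
qed

lemma schwartz_gaussian_packet: "\<sigma> \<noteq> 0 \<Longrightarrow> schwartz (gaussian_packet \<sigma> \<omega>)"
  unfolding gaussian_packet_eq_poly_packet by (rule schwartz_poly_packet) simp

lemma fourier_gaussian_packet:
  assumes \<sigma>: "\<sigma> > 0"
  shows "fourier (gaussian_packet \<sigma> \<omega>) \<xi> = complex_of_real (exp (- (\<sigma>\<^sup>2 * (\<xi> - \<omega>)\<^sup>2) / 2))"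
proof -
  have c: "1 / (2 * \<sigma>\<^sup>2) > 0"
    using \<sigma> by simp
  have integrand: "exp (- \<i> * complex_of_real (x * \<xi>)) * gaussian_packet \<sigma> \<omega> x =
     complex_of_real (1 / (\<sigma> * sqrt (2 * pi))) *
     (exp (\<i> * complex_of_real ((\<omega> - \<xi>) * x)) * complex_of_real (exp (- (1 / (2 * \<sigma>\<^sup>2)) * (x - 0)\<^sup>2)))" for x
  proof -
    have "exp (- \<i> * complex_of_real (x * \<xi>)) * exp (\<i> * complex_of_real (\<omega> * x))
        = exp (\<i> * complex_of_real ((\<omega> - \<xi>) * x))"
      by (simp add: exp_add [symmetric] algebra_simps)
    then show ?thesis
      unfolding gaussian_packet_def by (simp add: ac_simps)
  qed
  have "fourier (gaussian_packet \<sigma> \<omega>) \<xi> = complex_of_real ((1 / (\<sigma> * sqrt (2 * pi)) *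
      sqrt (pi / (1 / (2 * \<sigma>\<^sup>2)))) * exp (- (\<omega> - \<xi>)\<^sup>2 / (4 * (1 / (2 * \<sigma>\<^sup>2)))))"
    unfolding fourier_def integrand integral_mult_right_zero integral_iexp_gaussian [OF c]
    by (simp add: mult.assoc)
  also have "1 / (\<sigma> * sqrt (2 * pi)) * sqrt (pi / (1 / (2 * \<sigma>\<^sup>2))) = 1"
    using \<sigma> by (simp add: real_sqrt_mult real_sqrt_divide field_simps)
  also have "- (\<omega> - \<xi>)\<^sup>2 / (4 * (1 / (2 * \<sigma>\<^sup>2))) = - (\<sigma>\<^sup>2 * (\<xi> - \<omega>)\<^sup>2) / 2"
    using \<sigma> by (simp add: field_simps power2_commute)
  finally show ?thesis
    by simp
qed

lemma Hs_norm_gaussian_packet: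
  assumes "\<sigma> > 0"
  shows "Hs_norm s (gaussian_packet \<sigma> \<omega>) = sqrt (\<integral>\<xi>. (1 + \<xi>\<^sup>2) powr s * exp (- (\<sigma>\<^sup>2 * (\<xi> - \<omega>)\<^sup>2)) \<partial>lborel)"
proof -
  have "(norm (fourier (gaussian_packet \<sigma> \<omega>) \<xi>))\<^sup>2 = exp (- (\<sigma>\<^sup>2 * (\<xi> - \<omega>)\<^sup>2))" for \<xi>
    unfolding fourier_gaussian_packet [OF assms] norm_of_real
    by (simp add: power2_eq_square exp_add [symmetric])
  then show ?thesis
    unfolding Hs_norm_def by simp
qed

lemma Hs_norm_gaussian_packet_tendsto_zero:
  assumes s: "s < 0"
  shows "(\<lambda>n. Hs_norm s (gaussian_packet 1 (real n))) \<longlonglongrightarrow> 0"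
proof -
  define g where "g n x = (1 + (real n + x)\<^sup>2) powr s * exp (- x\<^sup>2)" for n x
  have shift: "(\<integral>\<xi>. (1 + \<xi>\<^sup>2) powr s * exp (- (1\<^sup>2 * (\<xi> - real n)\<^sup>2)) \<partial>lborel) = (\<integral>x. g n x \<partial>lborel)" for n
    unfolding g_def by (subst lborel_integral_real_affine [where c = 1 and t = "real n"]) auto
  have "(\<lambda>n. \<integral>x. g n x \<partial>lborel) \<longlonglongrightarrow> (\<integral>x. 0 \<partial>(lborel :: real measure))"
  proof (rule integral_dominated_convergence [where w = "\<lambda>x. exp (- x\<^sup>2)" and s = g and f = "\<lambda>x. 0"])
    show "integrable lborel (\<lambda>x::real. exp (- x\<^sup>2))"
      using integrable_gaussian [of 1 0] by simp
    show "AE x in lborel. (\<lambda>n. g n x) \<longlonglongrightarrow> 0"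
    proof (rule AE_I2)
      fix x :: real
      have "filterlim (\<lambda>n. 1 + (real n + x)\<^sup>2) at_top sequentially"
        by real_asymp
      then show "(\<lambda>n. g n x) \<longlonglongrightarrow> 0"
        unfolding g_def by (intro tendsto_mult_left_zero tendsto_neg_powr [OF s])
    qed
    show "AE x in lborel. norm (g n x) \<le> exp (- x\<^sup>2)" for n
    proof (rule AE_I2)
      fix x :: real
      have "(1 + (real n + x)\<^sup>2) powr s \<le> (1 + (real n + x)\<^sup>2) powr 0"
        using s by (intro powr_mono) auto
      moreover have "1 + (real n + x)\<^sup>2 > 0"
        by (simp add: add_pos_nonneg)
      ultimately have "(1 + (real n + x)\<^sup>2) powr s \<le> 1"
        by simp
      then show "norm (g n x) \<le> exp (- x\<^sup>2)"
        unfolding g_def by (simp add: abs_mult mult_left_le_one_le)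
    qed
  qed (simp_all add: g_def [abs_def])
  then have "(\<lambda>n. sqrt (\<integral>x. g n x \<partial>lborel)) \<longlonglongrightarrow> sqrt 0"
    by (intro tendsto_intros) simp
  then show ?thesis
    unfolding Hs_norm_gaussian_packet [OF zero_less_one] shift by simp
qed

lemma sobolev_weight_gaussian_le:
  fixes N s \<xi> :: real
  assumes N: "N \<ge> 1" and s: "0 \<le> s" "s \<le> 1"
  shows "(1 + \<xi>\<^sup>2) powr s * exp (- \<xi>\<^sup>2 / N\<^sup>2) \<le> 2 * N powr (2 * s) * exp (- \<xi>\<^sup>2 / (2 * N\<^sup>2))"
proof -
  have "N > 0"
    using N by simp
  define y where "y = \<xi>\<^sup>2 / N\<^sup>2"
  have "y \<ge> 0"
    by (simp add: y_def)
  have "(1 + y) powr s \<le> 1 + y"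
    using s \<open>y \<ge> 0\<close> powr_mono [of s 1 "1 + y"] by simp
  also have "\<dots> \<le> 2 * exp (y / 2)"
    using exp_ge_add_one_self [of "y / 2"] \<open>y \<ge> 0\<close> by linarith
  finally have weight: "(1 + y) powr s \<le> 2 * exp (y / 2)" .
  have "1 + \<xi>\<^sup>2 \<le> N\<^sup>2 * (1 + y)"
    using N \<open>N > 0\<close> by (simp add: y_def distrib_left one_le_power)
  then have "(1 + \<xi>\<^sup>2) powr s \<le> (N\<^sup>2 * (1 + y)) powr s"
    using s by (intro powr_mono2) auto
  also have "\<dots> = N powr (2 * s) * (1 + y) powr s"
    using \<open>y \<ge> 0\<close> \<open>N > 0\<close> by (simp add: powr_mult powr_powr [symmetric])
  finally have "(1 + \<xi>\<^sup>2) powr s * exp (- y) \<le> N powr (2 * s) * (1 + y) powr s * exp (- y)"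
    by (simp add: mult_right_mono)
  also have "\<dots> \<le> N powr (2 * s) * (2 * exp (y / 2)) * exp (- y)"
    using weight by (intro mult_right_mono mult_left_mono) auto
  also have "\<dots> = 2 * N powr (2 * s) * exp (- y / 2)"
    by (simp add: exp_add [symmetric] mult_ac)
  finally show ?thesis
    by (simp add: y_def mult.commute)
qed

lemma Hs_norm_narrow_packet_le:
  fixes N s :: real
  assumes N: "N \<ge> 1" and s: "0 \<le> s" "s \<le> 1"
  shows "Hs_norm s (gaussian_packet (1 / N) 0) \<le> sqrt (2 * sqrt (2 * pi)) * N powr (s + 1 / 2)"
proof -
  have "N > 0"
    using N by simp
  have integrable_bound: "integrable lborel (\<lambda>\<xi>. 2 * N powr (2 * s) * exp (- \<xi>\<^sup>2 / (2 * N\<^sup>2)))"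
    using integrable_gaussian [of "1 / (2 * N\<^sup>2)" 0] \<open>N > 0\<close> by simp
  have "(\<integral>\<xi>. (1 + \<xi>\<^sup>2) powr s * exp (- \<xi>\<^sup>2 / N\<^sup>2) \<partial>lborel)
      \<le> (\<integral>\<xi>. 2 * N powr (2 * s) * exp (- \<xi>\<^sup>2 / (2 * N\<^sup>2)) \<partial>lborel)"
  proof (rule integral_mono [OF _ integrable_bound sobolev_weight_gaussian_le [OF N s]])
    show "integrable lborel (\<lambda>\<xi>. (1 + \<xi>\<^sup>2) powr s * exp (- \<xi>\<^sup>2 / N\<^sup>2))"
      by (rule Bochner_Integration.integrable_bound [OF integrable_bound])
        (use sobolev_weight_gaussian_le [OF N s] in auto)
  qed
  also have "\<dots> = 2 * N powr (2 * s) * (sqrt (2 * pi) * N)"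
    using integral_gaussian [of "1 / (2 * N\<^sup>2)" 0] \<open>N > 0\<close> by (simp add: real_sqrt_mult)
  also have "\<dots> = 2 * sqrt (2 * pi) * N powr (2 * s + 1)"
    using \<open>N > 0\<close> by (simp add: powr_add)
  finally have "Hs_norm s (gaussian_packet (1 / N) 0) \<le> sqrt (2 * sqrt (2 * pi) * N powr (2 * s + 1))"
    using \<open>N > 0\<close> by (simp add: Hs_norm_gaussian_packet power_divide)
  also have "\<dots> = sqrt (2 * sqrt (2 * pi)) * N powr (s + 1 / 2)"
    using \<open>N > 0\<close> by (simp add: real_sqrt_mult powr_half_sqrt_powr [symmetric] add_divide_distrib)
  finally show ?thesis .
qed

section \<open>Evolution of a Gaussian packet\<close>

definition packet_evolution_integrand :: "real \<Rightarrow> real \<Rightarrow> real \<Rightarrow> real \<Rightarrow> real \<Rightarrow> real \<Rightarrow> complex" where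
  "packet_evolution_integrand \<gamma> \<sigma> \<omega> y t \<xi> = exp (\<i> * complex_of_real (y * \<xi> + t * \<xi>\<^sup>2))
     * complex_of_real (exp (- (t powr \<gamma>) * \<xi>\<^sup>2)) * complex_of_real (exp (- (\<sigma>\<^sup>2 * (\<xi> - \<omega>)\<^sup>2) / 2))"

lemma P_op_gaussian_packet:
  "\<sigma> > 0 \<Longrightarrow> P_op \<gamma> (gaussian_packet \<sigma> \<omega>) y t =
     complex_of_real (1 / (2 * pi)) * (\<integral>\<xi>. packet_evolution_integrand \<gamma> \<sigma> \<omega> y t \<xi> \<partial>lborel)"
  unfolding P_op_def fourier_gaussian_packet packet_evolution_integrand_def ..

lemma norm_packet_evolution_integrand_le:
  "norm (packet_evolution_integrand \<gamma> \<sigma> \<omega> y t \<xi>) \<le> exp (- (\<sigma>\<^sup>2 * (\<xi> - \<omega>)\<^sup>2) / 2)"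
proof -
  have "exp (- (t powr \<gamma>) * \<xi>\<^sup>2) \<le> 1"
    by simp
  then show ?thesis
    unfolding packet_evolution_integrand_def norm_mult norm_exp_i_times norm_of_real
    by (simp add: mult_left_le_one_le)
qed

lemma integrable_packet_envelope:
  "(\<sigma>::real) > 0 \<Longrightarrow> integrable lborel (\<lambda>\<xi>. exp (- (\<sigma>\<^sup>2 * (\<xi> - \<omega>)\<^sup>2) / 2))"
  using integrable_gaussian [of "\<sigma>\<^sup>2 / 2" \<omega>] by simp

lemma borel_measurable_packet_evolution_integrand [measurable]:
  "packet_evolution_integrand \<gamma> \<sigma> \<omega> y t \<in> borel_measurable borel"
  unfolding packet_evolution_integrand_def by measurable

lemma integrable_packet_evolution_integrand:
  "\<sigma> > 0 \<Longrightarrow> integrable lborel (packet_evolution_integrand \<gamma> \<sigma> \<omega> y t)"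
  by (rule Bochner_Integration.integrable_bound [OF integrable_packet_envelope [of \<sigma> \<omega>]])
    (use norm_packet_evolution_integrand_le in auto)

lemma norm_P_op_gaussian_packet_le:
  assumes "\<sigma> > 0"
  shows "norm (P_op \<gamma> (gaussian_packet \<sigma> \<omega>) y t) \<le> 1 / (2 * pi) * (\<integral>\<xi>. exp (- (\<sigma>\<^sup>2 * (\<xi> - \<omega>)\<^sup>2) / 2) \<partial>lborel)"
proof -
  have "norm (\<integral>\<xi>. packet_evolution_integrand \<gamma> \<sigma> \<omega> y t \<xi> \<partial>lborel)
      \<le> (\<integral>\<xi>. norm (packet_evolution_integrand \<gamma> \<sigma> \<omega> y t \<xi>) \<partial>lborel)"
    by (rule integral_norm_bound)
  also have "\<dots> \<le> (\<integral>\<xi>. exp (- (\<sigma>\<^sup>2 * (\<xi> - \<omega>)\<^sup>2) / 2) \<partial>lborel)"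
    using assms by (intro integral_mono norm_packet_evolution_integrand_le integrable_norm
        integrable_packet_evolution_integrand integrable_packet_envelope)
  finally show ?thesis
    unfolding P_op_gaussian_packet [OF assms] norm_mult norm_of_real by (simp add: divide_right_mono)
qed

lemma continuous_on_P_op_gaussian_packet:
  assumes "\<sigma> > 0"
  shows "continuous_on UNIV (\<lambda>y. P_op \<gamma> (gaussian_packet \<sigma> \<omega>) y t)"
proof -
  have "continuous_on UNIV (\<lambda>y. \<integral>\<xi>. packet_evolution_integrand \<gamma> \<sigma> \<omega> y t \<xi> \<partial>lborel)"
  proof (rule continuous_on_parametric_integral [OF integrable_packet_envelope [OF assms]
        norm_packet_evolution_integrand_le])
    show "continuous_on UNIV (\<lambda>y. packet_evolution_integrand \<gamma> \<sigma> \<omega> y t \<xi>)" for \<xi>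
      unfolding packet_evolution_integrand_def by (intro continuous_intros)
  qed simp
  then show ?thesis
    unfolding P_op_gaussian_packet [OF assms] by (intro continuous_intros)
qed

lemma norm_P_op_gaussian_packet_at_0:
  assumes \<sigma>: "\<sigma> > 0" and \<gamma>: "\<gamma> > 0"
  shows "norm (P_op \<gamma> (gaussian_packet \<sigma> \<omega>) y 0) = exp (- y\<^sup>2 / (2 * \<sigma>\<^sup>2)) / (\<sigma> * sqrt (2 * pi))"
proof -
  have c: "\<sigma>\<^sup>2 / 2 > 0"
    using \<sigma> by simp
  have "P_op \<gamma> (gaussian_packet \<sigma> \<omega>) y 0 = complex_of_real (1 / (2 * pi)) *
      (\<integral>\<xi>. exp (\<i> * complex_of_real (y * \<xi>)) * complex_of_real (exp (- (\<sigma>\<^sup>2 / 2) * (\<xi> - \<omega>)\<^sup>2)) \<partial>lborel)"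
    unfolding P_op_def fourier_gaussian_packet [OF \<sigma>] using \<gamma> by simp
  also have "\<dots> = complex_of_real (1 / (2 * pi)) * (exp (\<i> * complex_of_real (y * \<omega>)) *
      complex_of_real (sqrt (pi / (\<sigma>\<^sup>2 / 2)) * exp (- y\<^sup>2 / (4 * (\<sigma>\<^sup>2 / 2)))))"
    unfolding integral_iexp_gaussian [OF c] ..
  finally have "norm (P_op \<gamma> (gaussian_packet \<sigma> \<omega>) y 0)
      = 1 / (2 * pi) * (sqrt (pi / (\<sigma>\<^sup>2 / 2)) * exp (- y\<^sup>2 / (4 * (\<sigma>\<^sup>2 / 2))))"
    by (simp only: norm_mult norm_exp_i_times norm_of_real) simp
  also have "\<dots> = (1 / (2 * pi) * sqrt (pi / (\<sigma>\<^sup>2 / 2))) * exp (- y\<^sup>2 / (2 * \<sigma>\<^sup>2))"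
    by simp
  also have "1 / (2 * pi) * sqrt (pi / (\<sigma>\<^sup>2 / 2)) = 1 / (\<sigma> * sqrt (2 * pi))"
    using \<sigma> by (simp add: real_sqrt_divide real_sqrt_mult field_simps)
  finally show ?thesis
    by simp
qed

lemma norm_P_op_narrow_packet_ge:
  fixes N t \<gamma> :: real
  assumes N: "N \<ge> 1" and t: "0 \<le> t" "t \<le> 1 / (8 * N\<^sup>2)" "t powr \<gamma> \<le> 1 / (8 * N\<^sup>2)"
  shows "N / (4 * sqrt pi) \<le> norm (P_op \<gamma> (gaussian_packet (1 / N) 0) 0 t)"
proof -
  define b where "b = t powr \<gamma> + 1 / (2 * N\<^sup>2)"
  have "N > 0"
    using N by simp
  have "1 / (2 * N\<^sup>2) > 0" "4 * (1 / (8 * N\<^sup>2)) = 1 / (2 * N\<^sup>2)"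
      "1 / (8 * N\<^sup>2) + 1 / (2 * N\<^sup>2) \<le> 1 / N\<^sup>2"
    using \<open>N > 0\<close> by (simp_all add: field_simps)
  then have b_bounds: "0 < b" "4 * t \<le> b" "b \<le> 1 / N\<^sup>2"
    using t powr_ge_zero [of t \<gamma>] unfolding b_def by (linarith+)
  have "1 / N > 0"
    using \<open>N > 0\<close> by simp
  note integrable = integrable_packet_evolution_integrand [OF this, of \<gamma> 0 0 t]
  have Re_integrand: "Re (packet_evolution_integrand \<gamma> (1 / N) 0 0 t \<xi>) = cos (t * \<xi>\<^sup>2) * exp (- b * \<xi>\<^sup>2)" for \<xi>
  proof -
    have "exp (- (t powr \<gamma>) * \<xi>\<^sup>2) * exp (- ((1 / N)\<^sup>2 * (\<xi> - 0)\<^sup>2) / 2) = exp (- b * \<xi>\<^sup>2)"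
      by (simp add: b_def exp_add [symmetric] power_divide algebra_simps)
    then show ?thesis
      unfolding packet_evolution_integrand_def by (simp add: Re_exp mult.assoc)
  qed
  have "sqrt pi * N / 2 = sqrt (pi * N\<^sup>2) / 2"
    using \<open>N > 0\<close> by (simp add: real_sqrt_mult)
  also have "\<dots> \<le> sqrt (pi / b) / 2"
    using b_bounds \<open>N > 0\<close> by (simp add: field_simps)
  also have "\<dots> \<le> (\<integral>\<xi>. cos (t * \<xi>\<^sup>2) * exp (- b * \<xi>\<^sup>2) \<partial>lborel)"
    by (rule integral_chirp_gaussian_ge [OF t(1) b_bounds(1,2)])
  also have "\<dots> = (\<integral>\<xi>. Re (packet_evolution_integrand \<gamma> (1 / N) 0 0 t \<xi>) \<partial>lborel)"
    unfolding Re_integrand ..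
  also have "\<dots> = Re (\<integral>\<xi>. packet_evolution_integrand \<gamma> (1 / N) 0 0 t \<xi> \<partial>lborel)"
    using integrable by (rule integral_Re)
  also have "\<dots> \<le> norm (\<integral>\<xi>. packet_evolution_integrand \<gamma> (1 / N) 0 0 t \<xi> \<partial>lborel)"
    by (rule complex_Re_le_cmod)
  finally have lower: "sqrt pi * N / 2 \<le> norm (\<integral>\<xi>. packet_evolution_integrand \<gamma> (1 / N) 0 0 t \<xi> \<partial>lborel)" .
  have "N / (4 * sqrt pi) = 1 / (2 * pi) * (sqrt pi * N / 2)"
    by (simp add: field_simps flip: real_sqrt_mult)
  also have "\<dots> \<le> 1 / (2 * pi) * norm (\<integral>\<xi>. packet_evolution_integrand \<gamma> (1 / N) 0 0 t \<xi> \<partial>lborel)"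
    using lower by (intro mult_left_mono) auto
  also have "\<dots> = norm (P_op \<gamma> (gaussian_packet (1 / N) 0) 0 t)"
    unfolding P_op_gaussian_packet [OF \<open>1 / N > 0\<close>] norm_mult norm_of_real by simp
  finally show ?thesis .
qed

section \<open>Lower bounds for the maximal function\<close>

text \<open>Continuity and the bound \<open>M\<close> make the supremum measurable and square integrable on
  \<open>[-1,1]\<close>; otherwise the Bochner integral in \<^const>\<open>max_norm\<close> would be the junk value \<open>0\<close>.\<close>

lemma max_norm_ge:
  fixes f :: "real \<Rightarrow> complex"
  assumes cont: "\<And>t. t \<in> {0..1} \<Longrightarrow> continuous_on UNIV (\<lambda>x. norm (P_op \<gamma> f (Gamma_curve \<alpha> x t) t))"
    and bounded: "\<And>x t. t \<in> {0..1} \<Longrightarrow> norm (P_op \<gamma> f (Gamma_curve \<alpha> x t) t) \<le> M"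
    and ab: "-1 \<le> a" "a \<le> b" "b \<le> 1" and L: "L \<ge> 0"
    and large: "\<And>x. x \<in> {a..b} \<Longrightarrow> \<exists>t\<in>{0..1}. L \<le> norm (P_op \<gamma> f (Gamma_curve \<alpha> x t) t)"
  shows "L * sqrt (b - a) \<le> max_norm \<alpha> \<gamma> f"
proof -
  define S where "S x = (SUP t\<in>{0..1::real}. norm (P_op \<gamma> f (Gamma_curve \<alpha> x t) t))" for x
  have bdd: "bdd_above ((\<lambda>t. norm (P_op \<gamma> f (Gamma_curve \<alpha> x t) t)) ` {0..1})" for x
    using bounded by (intro bdd_aboveI2) auto
  have S_nonneg: "0 \<le> S x" for x
    unfolding S_def by (rule cSUP_upper2 [OF bdd, of 0]) auto
  have S_le: "S x \<le> M" for x
    unfolding S_def by (rule cSUP_least) (use bounded in auto)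
  have S_ge: "L \<le> S x" if "x \<in> {a..b}" for x
    using large [OF that] cSUP_upper2 [OF bdd] unfolding S_def by blast
  have "S \<in> borel_measurable borel"
    unfolding S_def by (rule borel_measurable_SUP_continuous [OF cont _ bdd]) auto
  have integrable_S: "integrable lborel (\<lambda>x::real. indicator {-1..1} x * (S x)\<^sup>2)"
  proof (rule Bochner_Integration.integrable_bound [where f = "\<lambda>x. indicator {-1..1} x * M\<^sup>2"])
    show "integrable lborel (\<lambda>x::real. indicator {-1..1} x * M\<^sup>2)"
      by (intro integrable_mult_left integrable_real_indicator) auto
    show "(\<lambda>x. indicator {-1..1} x * (S x)\<^sup>2) \<in> borel_measurable lborel"
      using \<open>S \<in> borel_measurable borel\<close> by measurable
    show "AE x in lborel. norm (indicator {-1..1} x * (S x)\<^sup>2) \<le> norm (indicator {-1..1} x * M\<^sup>2)"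
      using S_nonneg S_le by (intro AE_I2) (auto simp: indicator_def intro!: power_mono)
  qed
  have "L\<^sup>2 * (b - a) = (\<integral>x. indicator {a..b} x * L\<^sup>2 \<partial>lborel)"
    using ab by simp
  also have "\<dots> \<le> (\<integral>x. indicator {-1..1} x * (S x)\<^sup>2 \<partial>lborel)"
  proof (rule integral_mono [OF _ integrable_S])
    show "integrable lborel (\<lambda>x::real. indicator {a..b} x * L\<^sup>2)"
      using ab by (intro integrable_mult_left integrable_real_indicator) auto
    show "indicator {a..b} x * L\<^sup>2 \<le> indicator {-1..1} x * (S x)\<^sup>2" for x
      using S_ge [of x] L ab by (auto simp: indicator_def intro!: power_mono)
  qed
  also have "\<dots> = (LINT x:{-1..1}|lborel. (S x)\<^sup>2)"
    by (simp add: set_lebesgue_integral_def)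
  finally have "sqrt (L\<^sup>2 * (b - a)) \<le> max_norm \<alpha> \<gamma> f"
    unfolding max_norm_def S_def by simp
  then show ?thesis
    using L ab by (simp add: real_sqrt_mult)
qed

lemma max_norm_gaussian_packet_ge:
  assumes \<sigma>: "\<sigma> > 0" and ab: "-1 \<le> a" "a \<le> b" "b \<le> 1" and L: "L \<ge> 0"
    and large: "\<And>x. x \<in> {a..b} \<Longrightarrow>
      \<exists>t\<in>{0..1}. L \<le> norm (P_op \<gamma> (gaussian_packet \<sigma> \<omega>) (Gamma_curve \<alpha> x t) t)"
  shows "L * sqrt (b - a) \<le> max_norm \<alpha> \<gamma> (gaussian_packet \<sigma> \<omega>)"
proof (rule max_norm_ge [OF _ norm_P_op_gaussian_packet_le [OF \<sigma>] ab L large])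
  show "continuous_on UNIV (\<lambda>x. norm (P_op \<gamma> (gaussian_packet \<sigma> \<omega>) (Gamma_curve \<alpha> x t) t))" for t
    unfolding Gamma_curve_def
    by (intro continuous_intros continuous_on_compose2 [OF continuous_on_P_op_gaussian_packet [OF \<sigma>]]) auto
qed

lemma max_norm_narrow_packet_ge:
  fixes \<alpha> \<gamma> N :: real
  assumes \<alpha>: "0 < \<alpha>" "\<alpha> \<le> 1" and \<gamma>: "0 < \<gamma>" and N: "N \<ge> 1"
  shows "N / (4 * sqrt pi) * (8 * N\<^sup>2) powr (- \<alpha> / (2 * min \<gamma> 1)) \<le> max_norm \<alpha> \<gamma> (gaussian_packet (1 / N) 0)"
proof -
  define \<mu> where "\<mu> = min \<gamma> 1"
  have \<mu>: "0 < \<mu>" "\<mu> \<le> 1" "\<mu> \<le> \<gamma>"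
    using \<gamma> by (auto simp: \<mu>_def)
  have "N > 0"
    using N by simp
  define \<delta> where "\<delta> = (8 * N\<^sup>2) powr (- \<alpha> / \<mu>)"
  have "0 < \<delta>"
    using \<open>N > 0\<close> by (simp add: \<delta>_def)
  have "1 \<le> 8 * N\<^sup>2"
    using N one_le_power [of N 2] by linarith
  then have "\<delta> \<le> (8 * N\<^sup>2) powr 0"
    unfolding \<delta>_def using \<alpha> \<mu> by (intro powr_mono) auto
  then have "\<delta> \<le> 1"
    using \<open>N > 0\<close> by simp
  have "\<delta> powr (\<mu> / \<alpha>) = (8 * N\<^sup>2) powr (- \<alpha> / \<mu> * (\<mu> / \<alpha>))"
    by (simp add: \<delta>_def powr_powr)
  also have "- \<alpha> / \<mu> * (\<mu> / \<alpha>) = - 1"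
    using \<alpha> \<mu> by simp
  finally have "\<delta> powr (\<mu> / \<alpha>) = 1 / (8 * N\<^sup>2)"
    using \<open>N > 0\<close> by (simp add: powr_minus_divide)
  have "N / (4 * sqrt pi) * sqrt (\<delta> - 0) \<le> max_norm \<alpha> \<gamma> (gaussian_packet (1 / N) 0)"
  proof (rule max_norm_gaussian_packet_ge)
    fix x
    assume x: "x \<in> {0..\<delta>}"
    define t where "t = x powr (1 / \<alpha>)"
    have "0 \<le> t" "t \<le> 1"
      using x \<open>\<delta> \<le> 1\<close> \<alpha> by (auto simp: t_def intro: powr_le1)
    have "Gamma_curve \<alpha> x t = 0"
      using x \<alpha> by (simp add: Gamma_curve_def t_def powr_powr)
    have "t powr \<mu> \<le> 1 / (8 * N\<^sup>2)"
    proof -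
      have "t powr \<mu> = x powr (\<mu> / \<alpha>)"
        by (simp add: t_def powr_powr)
      also have "\<dots> \<le> \<delta> powr (\<mu> / \<alpha>)"
        using x \<alpha> \<mu> by (intro powr_mono2) auto
      finally show ?thesis
        using \<open>\<delta> powr (\<mu> / \<alpha>) = 1 / (8 * N\<^sup>2)\<close> by simp
    qed
    moreover have "t \<le> t powr \<mu>" "t powr \<gamma> \<le> t powr \<mu>"
      using \<open>0 \<le> t\<close> \<open>t \<le> 1\<close> \<mu> powr_mono' [of \<mu> 1 t] powr_mono' [of \<mu> \<gamma> t] by auto
    ultimately have "N / (4 * sqrt pi) \<le> norm (P_op \<gamma> (gaussian_packet (1 / N) 0) 0 t)"
      using N \<open>0 \<le> t\<close> by (intro norm_P_op_narrow_packet_ge) auto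
    then show "\<exists>t\<in>{0..1}. N / (4 * sqrt pi) \<le> norm (P_op \<gamma> (gaussian_packet (1 / N) 0) (Gamma_curve \<alpha> x t) t)"
      using \<open>0 \<le> t\<close> \<open>t \<le> 1\<close> \<open>Gamma_curve \<alpha> x t = 0\<close> by (intro bexI [of _ t]) auto
  qed (use \<open>N > 0\<close> \<open>0 < \<delta>\<close> \<open>\<delta> \<le> 1\<close> in simp_all)
  moreover have "sqrt \<delta> = (8 * N\<^sup>2) powr (- \<alpha> / (2 * \<mu>))"
    using \<open>N > 0\<close> by (simp add: \<delta>_def powr_half_sqrt [symmetric] powr_powr mult.commute)
  ultimately show ?thesis
    by (simp add: \<mu>_def)
qed

section \<open>Necessary conditions on the Sobolev index\<close>

lemma sobolev_index_nonneg:
  assumes \<gamma>: "0 < \<gamma>"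
    and estimate: "\<forall>f. schwartz f \<longrightarrow> max_norm \<alpha> \<gamma> f \<le> C * Hs_norm s f"
  shows "s \<ge> 0"
proof (rule ccontr)
  assume "\<not> s \<ge> 0"
  define L where "L = exp (- 1 / 2) / sqrt (2 * pi)"
  have lower: "L * sqrt 2 \<le> C * Hs_norm s (gaussian_packet 1 (real n))" for n
  proof -
    have "L * sqrt (1 - (-1)) \<le> max_norm \<alpha> \<gamma> (gaussian_packet 1 (real n))"
    proof (rule max_norm_gaussian_packet_ge)
      fix x :: real
      assume "x \<in> {-1..1}"
      then have "exp (- 1 / 2) \<le> exp (- x\<^sup>2 / 2)"
        by (simp add: abs_square_le_1 abs_le_iff)
      then have "L \<le> norm (P_op \<gamma> (gaussian_packet 1 (real n)) (Gamma_curve \<alpha> x 0) 0)"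
        unfolding Gamma_curve_def L_def norm_P_op_gaussian_packet_at_0 [OF zero_less_one \<gamma>]
        by (simp add: divide_right_mono)
      then show "\<exists>t\<in>{0..1}. L \<le> norm (P_op \<gamma> (gaussian_packet 1 (real n)) (Gamma_curve \<alpha> x t) t)"
        by force
    qed (simp_all add: L_def)
    also have "\<dots> \<le> C * Hs_norm s (gaussian_packet 1 (real n))"
      using estimate schwartz_gaussian_packet [of 1] by simp
    finally show ?thesis
      by simp
  qed
  have "(\<lambda>n. C * Hs_norm s (gaussian_packet 1 (real n))) \<longlonglongrightarrow> C * 0"
    using \<open>\<not> s \<ge> 0\<close> by (intro tendsto_intros Hs_norm_gaussian_packet_tendsto_zero) simp
  then have "L * sqrt 2 \<le> 0"
    using lower by (simp add: LIMSEQ_le_const)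
  moreover have "L * sqrt 2 > 0"
    by (simp add: L_def)
  ultimately show False
    by simp
qed

lemma sobolev_index_ge:
  fixes \<alpha> \<gamma> s C :: real
  assumes \<alpha>: "0 < \<alpha>" "\<alpha> \<le> 1" and \<gamma>: "0 < \<gamma>" and s: "0 \<le> s"
    and estimate: "\<forall>f. schwartz f \<longrightarrow> max_norm \<alpha> \<gamma> f \<le> C * Hs_norm s f"
  shows "1 / 2 - \<alpha> / min \<gamma> 1 \<le> s"
proof (cases "s \<le> 1")
  case False
  have "0 < \<alpha> / min \<gamma> 1"
    using \<alpha> \<gamma> by simp
  then show ?thesis
    using False by linarith
next
  case True
  define \<mu> where "\<mu> = min \<gamma> 1"
  define K\<^sub>1 where "K\<^sub>1 = 8 powr (- \<alpha> / (2 * \<mu>)) / (4 * sqrt pi)"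
  define K\<^sub>2 where "K\<^sub>2 = max C 0 * sqrt (2 * sqrt (2 * pi))"
  have growth: "K\<^sub>1 * N powr (1 - \<alpha> / \<mu>) \<le> K\<^sub>2 * N powr (s + 1 / 2)" if N: "N \<ge> 1" for N :: real
  proof -
    have "N > 0"
      using N by simp
    have "N powr (- \<alpha> / \<mu>) = (N powr 2) powr (- \<alpha> / (2 * \<mu>))"
      by (simp add: powr_powr)
    then have "(8 * N\<^sup>2) powr (- \<alpha> / (2 * \<mu>)) = 8 powr (- \<alpha> / (2 * \<mu>)) * N powr (- \<alpha> / \<mu>)"
      using \<open>N > 0\<close> by (simp add: powr_mult powr_numeral)
    moreover have "N powr (1 - \<alpha> / \<mu>) = N * N powr (- \<alpha> / \<mu>)"
      using \<open>N > 0\<close> by (simp add: powr_diff powr_minus_divide)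
    ultimately have "K\<^sub>1 * N powr (1 - \<alpha> / \<mu>) = N / (4 * sqrt pi) * (8 * N\<^sup>2) powr (- \<alpha> / (2 * \<mu>))"
      by (simp add: K\<^sub>1_def)
    also have "\<dots> \<le> max_norm \<alpha> \<gamma> (gaussian_packet (1 / N) 0)"
      unfolding \<mu>_def using \<alpha> \<gamma> N by (rule max_norm_narrow_packet_ge)
    also have "\<dots> \<le> C * Hs_norm s (gaussian_packet (1 / N) 0)"
      using estimate schwartz_gaussian_packet [of "1 / N" 0] \<open>N > 0\<close> by simp
    also have "\<dots> \<le> max C 0 * Hs_norm s (gaussian_packet (1 / N) 0)"
      by (intro mult_right_mono) (auto simp: Hs_norm_def)
    also have "\<dots> \<le> max C 0 * (sqrt (2 * sqrt (2 * pi)) * N powr (s + 1 / 2))"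
      using N s True by (intro mult_left_mono Hs_norm_narrow_packet_le) auto
    finally show ?thesis
      by (simp add: K\<^sub>2_def mult.assoc)
  qed
  have "1 - \<alpha> / \<mu> \<le> s + 1 / 2"
    by (rule powr_le_const_mult_powr_imp_le [OF _ growth]) (simp add: K\<^sub>1_def)
  then show ?thesis
    by (simp add: \<mu>_def)
qed

theorem theorem3p1:
  fixes \<alpha> \<gamma> s C :: real
  assumes "0 < \<alpha>" and "\<alpha> \<le> 1" and "0 < \<gamma>"
    and "\<forall>f. schwartz f \<longrightarrow> max_norm \<alpha> \<gamma> f \<le> C * Hs_norm s f"
  shows "(\<gamma> < 1 \<longrightarrow> s \<ge> max (1/2 - \<alpha> / \<gamma>) 0) \<and>
         (1 \<le> \<gamma> \<longrightarrow> s \<ge> max (1/2 - \<alpha>) 0)"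
proof -
  have "s \<ge> 0"
    using assms(3,4) by (rule sobolev_index_nonneg)
  moreover have "s \<ge> 1 / 2 - \<alpha> / min \<gamma> 1"
    by (rule sobolev_index_ge [OF assms(1-3) \<open>s \<ge> 0\<close> assms(4)])
  ultimately show ?thesis
    by (auto simp: min_def split: if_splits)
qed

end
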